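(* Let $\mathcal{D}$ be a set equipped with a finite (nonnegative) measure $\mu$, and let $f,g:\mathcal{D}\to\mathbb{R}$ be bounded measurable functions. Let $\lambda$ denote the product of $\mu$ with Lebesgue measure on $\mathbb{R}$, a measure on $\mathcal{D}\times\mathbb{R}$. For a bounded measurable $h:\mathcal{D}\to\mathbb{R}$ put $$A_h=\{(x,y)\in\mathcal{D}\times\mathbb{R} : 0\le y\le h(x)\}\ \cup\ \{(x,y)\in\mathcal{D}\times\mathbb{R} : h(x)\le y<0\}.$$ Then the intersection kernel satisfies $$\kappa_{\cap}(f,g):=\lambda(A_f\cap A_g)=\tfrac12\big(\|f\|_{1_\mu}+\|g\|_{1_\mu}-\|f-g\|_{1_\mu}\big)=\int_{\{x:\min(f(x),g(x))\ge 0\}}\min(f(x),g(x))\,d\mu(x)-\int_{\{x:\max(f(x),g(x))<0\}}\max(f(x),g(x))\,d\mu(x),$$ and, provided $\lambda(A_f\cup A_g)\neq 0$, the Tanimoto kernel satisfies $$\kappa_{tanimoto}(f,g):=\frac{\lambda(A_f\cap A_g)}{\lambda(A_f\cup A_g)}=\frac{\tfrac12\big(\|f\|_{1_\mu}+\|g\|_{1_\mu}-\|f-g\|_{1_\mu}\big)}{\tfrac12\big(\|f\|_{1_\mu}+\|g\|_{1_\mu}+\|f-g\|_{1_\mu}\big)} =\frac{\int_{\{\min(f,g)\ge 0\}}\min(f,g)\,d\mu-\int_{\{\max(f,g)<0\}}\max(f,g)\,d\mu}{\int_{\{\max(f,g)\ge 0\}}\max(f,g)\,d\mu-\int_{\{\min(f,g)<0\}}\min(f,g)\,d\mu},$$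 where $\min(f,g)$ and $\max(f,g)$ denote pointwise minimum and maximum.
   Context: For a measurable $h:\mathcal{D}\to\mathbb{R}$, $\|h\|_{1_\mu}=\int_{\mathcal{D}}|h(x)|\,d\mu(x)$. The set $A_h$ is the region between the graph of $h$ and the $x$-axis: the part above the axis where $h\ge0$ and the part below the axis where $h<0$. *)

theory Defs
  imports "HOL-Analysis.Analysis"
begin

definition region :: "'a measure \<Rightarrow> ('a \<Rightarrow> real) \<Rightarrow> ('a \<times> real) set" where
  "region M h = {(x, y). x \<in> space M \<and> 0 \<le> y \<and> y \<le> h x}
              \<union> {(x, y). x \<in> space M \<and> h x \<le> y \<and> y < 0}"

definition L1norm :: "'a measure \<Rightarrow> ('a \<Rightarrow> real) \<Rightarrow> real" where
  "L1norm M h = (\<integral>x. \<bar>h x\<bar> \<partial>M)"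

definition kappa_cap :: "'a measure \<Rightarrow> ('a \<Rightarrow> real) \<Rightarrow> ('a \<Rightarrow> real) \<Rightarrow> real" where
  "kappa_cap M f g = measure (M \<Otimes>\<^sub>M lborel) (region M f \<inter> region M g)"

definition kappa_tanimoto :: "'a measure \<Rightarrow> ('a \<Rightarrow> real) \<Rightarrow> ('a \<Rightarrow> real) \<Rightarrow> real" where
  "kappa_tanimoto M f g = measure (M \<Otimes>\<^sub>M lborel) (region M f \<inter> region M g)
                        / measure (M \<Otimes>\<^sub>M lborel) (region M f \<union> region M g)"

end

theory Submission imports Defs begin

text \<open>By Tonelli, the product measure of a set is the \<open>\<mu>\<close>-integral of the lengths of its vertical
  slices. Over a point \<open>x\<close>, the slice of \<open>A\<^sub>f \<inter> A\<^sub>g\<close> is \<open>[0, min (f x) (g x)]\<close>,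
  \<open>[max (f x) (g x), 0)\<close> or empty, of length \<open>(\<bar>f x\<bar> + \<bar>g x\<bar> - \<bar>f x - g x\<bar>) / 2\<close>, and the slice
  of \<open>A\<^sub>f \<union> A\<^sub>g\<close> has length \<open>(\<bar>f x\<bar> + \<bar>g x\<bar> + \<bar>f x - g x\<bar>) / 2\<close>. Integrating these
  lengths gives both kernels; the min/max forms are the same integrands split by sign.\<close>

lemma sets_region:
  assumes "h \<in> borel_measurable M"
  shows "region M h \<in> sets (M \<Otimes>\<^sub>M lborel)"
proof -
  have "region M h = {p \<in> space (M \<Otimes>\<^sub>M lborel). 0 \<le> snd p \<and> snd p \<le> h (fst p)}
     \<union> {p \<in> space (M \<Otimes>\<^sub>M lborel). h (fst p) \<le> snd p \<and> snd p < 0}"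
    by (auto simp: region_def space_pair_measure)
  also have "\<dots> \<in> sets (M \<Otimes>\<^sub>M lborel)"
    using assms by measurable
  finally show ?thesis .
qed

lemma measure_pair_lborel_eq_integral_slices:
  assumes S: "S \<in> sets (M \<Otimes>\<^sub>M lborel)"
    and slice: "\<And>x. x \<in> space M \<Longrightarrow> emeasure lborel (Pair x -` S) = ennreal (c x)"
    and c: "integrable M c" "\<And>x. x \<in> space M \<Longrightarrow> 0 \<le> c x"
  shows "measure (M \<Otimes>\<^sub>M lborel) S = (\<integral>x. c x \<partial>M)"
proof -
  have "emeasure (M \<Otimes>\<^sub>M lborel) S = (\<integral>\<^sup>+x. emeasure lborel (Pair x -` S) \<partial>M)"
    by (rule lborel.emeasure_pair_measure_alt[OF S])
  also have "\<dots> = (\<integral>\<^sup>+x. ennreal (c x) \<partial>M)"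
    by (rule nn_integral_cong) (simp add: slice)
  also have "\<dots> = ennreal (\<integral>x. c x \<partial>M)"
    by (rule nn_integral_eq_integral[OF c(1)]) (simp add: c(2))
  finally show ?thesis
    by (simp add: measure_def integral_nonneg c(2))
qed

lemma emeasure_Pair_vimage_region_Int:
  assumes "x \<in> space M"
  shows "emeasure lborel (Pair x -` (region M f \<inter> region M g))
     = ennreal ((\<bar>f x\<bar> + \<bar>g x\<bar> - \<bar>f x - g x\<bar>) / 2)"
proof -
  have "Pair x -` (region M f \<inter> region M g) =
     (if 0 \<le> f x \<and> 0 \<le> g x then {0..min (f x) (g x)}
      else if f x < 0 \<and> g x < 0 then {max (f x) (g x)..<0} else {})"
    using assms by (auto simp: region_def)
  then show ?thesis
    by (auto simp: abs_if)
qed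

lemma emeasure_Pair_vimage_region_Un:
  assumes "x \<in> space M"
  shows "emeasure lborel (Pair x -` (region M f \<union> region M g))
     = ennreal ((\<bar>f x\<bar> + \<bar>g x\<bar> + \<bar>f x - g x\<bar>) / 2)"
proof -
  have "Pair x -` (region M f \<union> region M g) =
     (if 0 \<le> f x \<and> 0 \<le> g x then {0..max (f x) (g x)}
      else if f x < 0 \<and> g x < 0 then {min (f x) (g x)..<0}
      else {min (f x) (g x)..max (f x) (g x)})"
    using assms by (auto simp: region_def)
  then show ?thesis
    by (auto simp: abs_if max_def min_def)
qed

lemma measure_region_Int:
  assumes f: "integrable M f" and g: "integrable M g"
  shows "measure (M \<Otimes>\<^sub>M lborel) (region M f \<inter> region M g)
       = (L1norm M f + L1norm M g - L1norm M (\<lambda>x. f x - g x)) / 2"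
proof -
  have "measure (M \<Otimes>\<^sub>M lborel) (region M f \<inter> region M g)
      = (\<integral>x. (\<bar>f x\<bar> + \<bar>g x\<bar> - \<bar>f x - g x\<bar>) / 2 \<partial>M)"
    using f g
    by (intro measure_pair_lborel_eq_integral_slices sets.Int sets_region
        emeasure_Pair_vimage_region_Int) auto
  also have "\<dots> = (L1norm M f + L1norm M g - L1norm M (\<lambda>x. f x - g x)) / 2"
    using f g by (simp add: L1norm_def)
  finally show ?thesis .
qed

lemma measure_region_Un:
  assumes f: "integrable M f" and g: "integrable M g"
  shows "measure (M \<Otimes>\<^sub>M lborel) (region M f \<union> region M g)
       = (L1norm M f + L1norm M g + L1norm M (\<lambda>x. f x - g x)) / 2"
proof -
  have "measure (M \<Otimes>\<^sub>M lborel) (region M f \<union> region M g)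
      = (\<integral>x. (\<bar>f x\<bar> + \<bar>g x\<bar> + \<bar>f x - g x\<bar>) / 2 \<partial>M)"
    using f g
    by (intro measure_pair_lborel_eq_integral_slices sets.Un sets_region
        emeasure_Pair_vimage_region_Un) auto
  also have "\<dots> = (L1norm M f + L1norm M g + L1norm M (\<lambda>x. f x - g x)) / 2"
    using f g by (simp add: L1norm_def)
  finally show ?thesis .
qed

lemma abs_overlap_eq_min_max:
  fixes a b :: real
  shows "(\<bar>a\<bar> + \<bar>b\<bar> - \<bar>a - b\<bar>) / 2
       = (if 0 \<le> min a b then min a b else 0) - (if max a b < 0 then max a b else 0)"
  by (auto simp: min_def max_def abs_if)

lemma abs_cover_eq_min_max:
  fixes a b :: real
  shows "(\<bar>a\<bar> + \<bar>b\<bar> + \<bar>a - b\<bar>) / 2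
       = (if 0 \<le> max a b then max a b else 0) - (if min a b < 0 then min a b else 0)"
  by (auto simp: min_def max_def abs_if)

lemma L1norm_overlap_eq_set_integrals:
  assumes f: "integrable M f" and g: "integrable M g"
  shows "(L1norm M f + L1norm M g - L1norm M (\<lambda>x. f x - g x)) / 2
       = (\<integral>x \<in> {x \<in> space M. min (f x) (g x) \<ge> 0}. min (f x) (g x) \<partial>M)
         - (\<integral>x \<in> {x \<in> space M. max (f x) (g x) < 0}. max (f x) (g x) \<partial>M)"
proof -
  have "(L1norm M f + L1norm M g - L1norm M (\<lambda>x. f x - g x)) / 2
      = (\<integral>x. (\<bar>f x\<bar> + \<bar>g x\<bar> - \<bar>f x - g x\<bar>) / 2 \<partial>M)"
    using f g by (simp add: L1norm_def)
  also have "\<dots> = (\<integral>x. indicator {x \<in> space M. min (f x) (g x) \<ge> 0} x *\<^sub>R min (f x) (g x)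
                     - indicator {x \<in> space M. max (f x) (g x) < 0} x *\<^sub>R max (f x) (g x) \<partial>M)"
    by (rule Bochner_Integration.integral_cong[OF refl]) (simp add: abs_overlap_eq_min_max indicator_def)
  also have "\<dots> = (\<integral>x \<in> {x \<in> space M. min (f x) (g x) \<ge> 0}. min (f x) (g x) \<partial>M)
         - (\<integral>x \<in> {x \<in> space M. max (f x) (g x) < 0}. max (f x) (g x) \<partial>M)"
    unfolding set_lebesgue_integral_def
    using f g by (intro Bochner_Integration.integral_diff integrable_mult_indicator) auto
  finally show ?thesis .
qed

lemma L1norm_cover_eq_set_integrals:
  assumes f: "integrable M f" and g: "integrable M g"
  shows "(L1norm M f + L1norm M g + L1norm M (\<lambda>x. f x - g x)) / 2
       = (\<integral>x \<in> {x \<in> space M. max (f x) (g x) \<ge> 0}. max (f x) (g x) \<partial>M)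
         - (\<integral>x \<in> {x \<in> space M. min (f x) (g x) < 0}. min (f x) (g x) \<partial>M)"
proof -
  have "(L1norm M f + L1norm M g + L1norm M (\<lambda>x. f x - g x)) / 2
      = (\<integral>x. (\<bar>f x\<bar> + \<bar>g x\<bar> + \<bar>f x - g x\<bar>) / 2 \<partial>M)"
    using f g by (simp add: L1norm_def)
  also have "\<dots> = (\<integral>x. indicator {x \<in> space M. max (f x) (g x) \<ge> 0} x *\<^sub>R max (f x) (g x)
                     - indicator {x \<in> space M. min (f x) (g x) < 0} x *\<^sub>R min (f x) (g x) \<partial>M)"
    by (rule Bochner_Integration.integral_cong[OF refl]) (simp add: abs_cover_eq_min_max indicator_def)
  also have "\<dots> = (\<integral>x \<in> {x \<in> space M. max (f x) (g x) \<ge> 0}. max (f x) (g x) \<partial>M)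
         - (\<integral>x \<in> {x \<in> space M. min (f x) (g x) < 0}. min (f x) (g x) \<partial>M)"
    unfolding set_lebesgue_integral_def
    using f g by (intro Bochner_Integration.integral_diff integrable_mult_indicator) auto
  finally show ?thesis .
qed

lemma (in finite_measure) integrable_bounded_image:
  fixes h :: "'a \<Rightarrow> real"
  assumes "h \<in> borel_measurable M" and "bounded (h ` space M)"
  shows "integrable M h"
proof -
  obtain B where "\<And>x. x \<in> space M \<Longrightarrow> \<bar>h x\<bar> \<le> B"
    using assms(2) unfolding bounded_iff by auto
  then show ?thesis
    using assms(1) by (intro integrable_const_bound[where B = B]) auto
qed

theorem proposition2:
  fixes M :: "'a measure" and f g :: "'a \<Rightarrow> real"
  assumes "finite_measure M"
    and "f \<in> borel_measurable M" and "g \<in> borel_measurable M"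
    and "bounded (f ` space M)" and "bounded (g ` space M)"
  shows "kappa_cap M f g = (L1norm M f + L1norm M g - L1norm M (\<lambda>x. f x - g x)) / 2
       \<and> kappa_cap M f g =
           (\<integral>x \<in> {x \<in> space M. min (f x) (g x) \<ge> 0}. min (f x) (g x) \<partial>M)
         - (\<integral>x \<in> {x \<in> space M. max (f x) (g x) < 0}. max (f x) (g x) \<partial>M)
       \<and> (measure (M \<Otimes>\<^sub>M lborel) (region M f \<union> region M g) \<noteq> 0 \<longrightarrow>
            kappa_tanimoto M f g =
              ((L1norm M f + L1norm M g - L1norm M (\<lambda>x. f x - g x)) / 2)
              / ((L1norm M f + L1norm M g + L1norm M (\<lambda>x. f x - g x)) / 2)
          \<and> kappa_tanimoto M f g =
              ((\<integral>x \<in> {x \<in> space M. min (f x) (g x) \<ge> 0}. min (f x) (g x) \<partial>M)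
               - (\<integral>x \<in> {x \<in> space M. max (f x) (g x) < 0}. max (f x) (g x) \<partial>M))
              / ((\<integral>x \<in> {x \<in> space M. max (f x) (g x) \<ge> 0}. max (f x) (g x) \<partial>M)
               - (\<integral>x \<in> {x \<in> space M. min (f x) (g x) < 0}. min (f x) (g x) \<partial>M)))"
proof -
  have f: "integrable M f" and g: "integrable M g"
    using assms finite_measure.integrable_bounded_image by blast+
  have tanimoto: "kappa_tanimoto M f g
      = kappa_cap M f g / measure (M \<Otimes>\<^sub>M lborel) (region M f \<union> region M g)"
    by (simp add: kappa_tanimoto_def kappa_cap_def)
  show ?thesis
    unfolding tanimoto kappa_cap_def measure_region_Int[OF f g] measure_region_Un[OF f g]
      L1norm_overlap_eq_set_integrals[OF f g] L1norm_cover_eq_set_integrals[OF f g]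
    by simp
qed

end
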